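(* Let $1\le p<\infty$. Let $\boldsymbol v=(v_n)_{n\in\mathbb{N}}$ and $\boldsymbol w=(w_n)_{n\in\mathbb{N}}$ be weight sequences such that $B_{\boldsymbol v}$ and $B_{\boldsymbol w}$ are frequently hypercyclic on $\ell_p$. If $FHC(B_{\boldsymbol v})\cap FHC(B_{\boldsymbol w})\neq\emptyset$, then for every $0<\varepsilon<1$ there exist increasing sequences $(m_k),(n_k),(m'_k),(n'_k)$ of positive integers tending to infinity with $\liminf_k n_k/m_k>0$, $\limsup_k n_k/m_k<\varepsilon$, $\liminf_k n'_k/m'_k>0$, $\limsup_k n'_k/m'_k<\varepsilon$, such that \[ \sum_{l\ge1}\frac{|w_1\cdots w_{m_l}|^p}{|v_1\cdots v_{m_l}|^p|w_1\cdots w_{m_l-n_l}|^p}<\infty \quad\text{and}\quad \sum_{l\ge1}\frac{|v_1\cdots v_{m'_l}|^p}{|w_1\cdots w_{m'_l}|^p|v_1\cdots v_{m'_l-n'_l}|^p}<\infty . \]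
   Context: $\ell_p$ is the space of complex sequences $(x_n)_{n\ge0}$ with finite $\|x\|_p$, unit vectors $(e_n)_{n\ge0}$. A weight is a bounded sequence of nonzero complex numbers; $B_{\boldsymbol w}e_0=0$, $B_{\boldsymbol w}e_n=w_ne_{n-1}$; empty products equal $1$. $FHC(T)$ is the set of vectors $x$ such that for every nonempty open $U$, $\{n:T^nx\in U\}$ has positive lower density; $T$ is frequently hypercyclic if $FHC(T)\ne\emptyset$. *)

theory Defs
  imports "HOL-Analysis.Analysis" "HOL-Library.Liminf_Limsup"
begin

text \<open>Sequences indexed by nat (e_n corresponds to index n).\<close>

definition lp_space :: "real \<Rightarrow> (nat \<Rightarrow> complex) set" where
  "lp_space p = {x. summable (\<lambda>n. norm (x n) powr p)}"

definition lp_norm :: "real \<Rightarrow> (nat \<Rightarrow> complex) \<Rightarrow> real" where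
  "lp_norm p x = (\<Sum>n. norm (x n) powr p) powr (1 / p)"

definition lp_open :: "real \<Rightarrow> (nat \<Rightarrow> complex) set \<Rightarrow> bool" where
  "lp_open p U \<longleftrightarrow> U \<subseteq> lp_space p \<and>
     (\<forall>x\<in>U. \<exists>e>0. \<forall>y\<in>lp_space p. lp_norm p (y - x) < e \<longrightarrow> y \<in> U)"

text \<open>A weight: bounded sequence of nonzero complex numbers (w_n, n >= 1 are used).\<close>
definition is_weight :: "(nat \<Rightarrow> complex) \<Rightarrow> bool" where
  "is_weight w \<longleftrightarrow> (\<forall>n\<ge>1. w n \<noteq> 0) \<and> bounded (range w)"

text \<open>Weighted backward shift: B_w e_0 = 0, B_w e_n = w_n e_(n-1).\<close>
definition bshift :: "(nat \<Rightarrow> complex) \<Rightarrow> (nat \<Rightarrow> complex) \<Rightarrow> (nat \<Rightarrow> complex)" where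
  "bshift w x = (\<lambda>n. w (Suc n) * x (Suc n))"

definition lower_density :: "nat set \<Rightarrow> ereal" where
  "lower_density A = liminf (\<lambda>N. ereal (real (card (A \<inter> {..<N})) / real N))"

definition FHC :: "real \<Rightarrow> ((nat \<Rightarrow> complex) \<Rightarrow> (nat \<Rightarrow> complex)) \<Rightarrow> (nat \<Rightarrow> complex) set" where
  "FHC p T = {x \<in> lp_space p. \<forall>U. lp_open p U \<and> U \<noteq> {} \<longrightarrow>
       lower_density {n. (T ^^ n) x \<in> U} > 0}"

end

theory Submission
  imports Defs
begin

(*
  Fix x in FHC(B_v) and FHC(B_w). The times m at which B_v^m x is close to e_0 have positive
  lower density, and so, for every l, do the times n at which all coordinates of B_w^n x are
  below 2^(-l-1). Coordinate 0 of B_v^m x is v_1...v_m x_m and coordinate m - n of B_w^n x is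
  w_(m-n+1)...w_m x_m, so for such a pair with n <= m the same entry x_m shows
  |w_(m-n+1)...w_m| < 2^(-l) |v_1...v_m|, i.e. the l-th summand is at most 2^(-lp).
  Positive lower density of the first set provides such an m in a window [K n, L n) for all
  large n, and choosing 1/K < eps controls n/m. Exchanging v and w gives the second series.
*)

lemma norm_le_lp_norm:
  assumes "z \<in> lp_space p" "p > 0"
  shows "norm (z i) \<le> lp_norm p z"
proof -
  have summable: "summable (\<lambda>n. norm (z n) powr p)"
    using assms(1) by (simp add: lp_space_def)
  have "norm (z i) powr p \<le> (\<Sum>n. norm (z n) powr p)"
    using sum_le_suminf[OF summable, of "{i}"] by simp
  then have "(norm (z i) powr p) powr (1/p) \<le> (\<Sum>n. norm (z n) powr p) powr (1/p)"
    using assms(2) by (intro powr_mono2) auto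
  with assms(2) show ?thesis
    by (simp add: lp_norm_def powr_powr)
qed

lemma lp_space_diff:
  assumes "x \<in> lp_space p" "y \<in> lp_space p" "p > 0"
  shows "y - x \<in> lp_space p"
proof -
  have bound: "norm ((y - x) n) powr p \<le> 2 powr p * (norm (y n) powr p + norm (x n) powr p)" for n
  proof -
    have "norm ((y - x) n) \<le> 2 * max (norm (y n)) (norm (x n))"
      using norm_triangle_ineq4[of "y n" "x n"] by simp
    then have "norm ((y - x) n) powr p \<le> (2 * max (norm (y n)) (norm (x n))) powr p"
      using assms(3) by (intro powr_mono2) auto
    also have "\<dots> = 2 powr p * max (norm (y n)) (norm (x n)) powr p"
      by (simp add: powr_mult)
    also have "max (norm (y n)) (norm (x n)) powr p \<le> norm (y n) powr p + norm (x n) powr p"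
      by (simp add: max_def)
    finally show ?thesis by simp
  qed
  have "summable (\<lambda>n. 2 powr p * (norm (y n) powr p + norm (x n) powr p))"
    using assms(1,2) by (intro summable_mult summable_add) (auto simp: lp_space_def)
  then have "summable (\<lambda>n. norm ((y - x) n) powr p)"
    by (rule summable_comparison_test'[where N=0]) (use bound in auto)
  then show ?thesis by (simp add: lp_space_def)
qed

lemma lp_openI_sup:
  assumes "p > 0" "U \<subseteq> lp_space p"
    and "\<And>x. x \<in> U \<Longrightarrow> \<exists>e>0. \<forall>y\<in>lp_space p. (\<exists>d<e. \<forall>i. norm (y i - x i) \<le> d) \<longrightarrow> y \<in> U"
  shows "lp_open p U"
  unfolding lp_open_def
proof (intro conjI ballI)
  fix x assume "x \<in> U"
  then obtain e where "e > 0" and e: "\<And>y. y \<in> lp_space p \<Longrightarrow> \<exists>d<e. \<forall>i. norm (y i - x i) \<le> d \<Longrightarrow> y \<in> U"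
    using assms(3) by blast
  have "y \<in> U" if "y \<in> lp_space p" "lp_norm p (y - x) < e" for y
  proof (rule e[OF that(1)])
    have "y - x \<in> lp_space p"
      using assms(1,2) \<open>x \<in> U\<close> that(1) by (intro lp_space_diff) auto
    then have "norm (y i - x i) \<le> lp_norm p (y - x)" for i
      using norm_le_lp_norm[of "y - x" p i] assms(1) by simp
    with that(2) show "\<exists>d<e. \<forall>i. norm (y i - x i) \<le> d" by blast
  qed
  with \<open>e > 0\<close> show "\<exists>e>0. \<forall>y\<in>lp_space p. lp_norm p (y - x) < e \<longrightarrow> y \<in> U"
    by blast
qed (use assms(2) in auto)

definition near_e0 :: "real \<Rightarrow> (nat \<Rightarrow> complex) set" where
  "near_e0 p = {y \<in> lp_space p. norm (y 0 - 1) < 1/2}"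

definition sup_ball :: "real \<Rightarrow> real \<Rightarrow> (nat \<Rightarrow> complex) set" where
  "sup_ball p \<eta> = {y \<in> lp_space p. \<exists>r<\<eta>. \<forall>i. norm (y i) \<le> r}"

lemma lp_open_near_e0: "p > 0 \<Longrightarrow> lp_open p (near_e0 p)"
proof (rule lp_openI_sup)
  fix x assume "x \<in> near_e0 p"
  then have "norm (x 0 - 1) < 1/2" by (simp add: near_e0_def)
  moreover have "norm (y 0 - 1) < 1/2"
    if "\<forall>i. norm (y i - x i) \<le> d" "d < 1/2 - norm (x 0 - 1)" for y :: "nat \<Rightarrow> complex" and d
    using that(1)[rule_format, of 0] that(2) norm_triangle_ineq[of "y 0 - x 0" "x 0 - 1"] by simp
  ultimately show "\<exists>e>0. \<forall>y\<in>lp_space p. (\<exists>d<e. \<forall>i. norm (y i - x i) \<le> d) \<longrightarrow> y \<in> near_e0 p"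
    by (intro exI[of _ "1/2 - norm (x 0 - 1)"]) (auto simp: near_e0_def)
qed (auto simp: near_e0_def)

lemma near_e0_nonempty: "near_e0 p \<noteq> {}"
proof -
  have "(\<lambda>n. if n = 0 then 1 else 0) \<in> lp_space p"
    unfolding lp_space_def mem_Collect_eq by (rule summable_finite[of "{0}"]) auto
  then show ?thesis by (auto simp: near_e0_def)
qed

lemma lp_open_sup_ball: "p > 0 \<Longrightarrow> lp_open p (sup_ball p \<eta>)"
proof (rule lp_openI_sup)
  fix x assume "x \<in> sup_ball p \<eta>"
  then obtain r where "r < \<eta>" and r: "\<And>i. norm (x i) \<le> r"
    by (auto simp: sup_ball_def)
  have "y \<in> sup_ball p \<eta>"
    if "y \<in> lp_space p" "d < \<eta> - r" "\<forall>i. norm (y i - x i) \<le> d" for y d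
  proof -
    have "norm (y i) \<le> d + r" for i
      using that(3)[rule_format, of i] norm_triangle_sub[of "y i" "x i"] r[of i] by linarith
    with that(1,2) show ?thesis
      unfolding sup_ball_def by (intro CollectI conjI exI[of _ "d + r"]) auto
  qed
  with \<open>r < \<eta>\<close> show "\<exists>e>0. \<forall>y\<in>lp_space p. (\<exists>d<e. \<forall>i. norm (y i - x i) \<le> d) \<longrightarrow> y \<in> sup_ball p \<eta>"
    by (intro exI[of _ "\<eta> - r"]) auto
qed (auto simp: sup_ball_def)

lemma sup_ball_nonempty: "\<eta> > 0 \<Longrightarrow> sup_ball p \<eta> \<noteq> {}"
  by (auto simp: sup_ball_def lp_space_def intro!: exI[of _ "\<lambda>_. 0"])

lemma funpow_bshift_apply:
  "(bshift w ^^ k) x i = (\<Prod>j\<in>{i<..i + k}. w j) * x (i + k)"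
proof (induction k arbitrary: x)
  case (Suc k)
  have "(bshift w ^^ Suc k) x i = (bshift w ^^ k) (bshift w x) i"
    by (simp only: funpow_Suc_right comp_def)
  also have "\<dots> = (\<Prod>j\<in>{i<..i + k}. w j) * w (Suc (i + k)) * x (Suc (i + k))"
    by (simp add: Suc.IH bshift_def)
  also have "\<dots> = (\<Prod>j\<in>{i<..i + Suc k}. w j) * x (i + Suc k)"
  proof -
    have "{i<..i + Suc k} = insert (Suc (i + k)) {i<..i + k}" by auto
    then show ?thesis by (simp add: ac_simps)
  qed
  finally show ?case .
qed simp

lemma prod_atLeastAtMost_split:
  fixes a n :: nat
  shows "(\<Prod>i=1..a + n. w i) = (\<Prod>i=1..a. w i) * (\<Prod>i\<in>{a<..a + n}. w i)"
  by (subst prod.union_disjoint[symmetric]) (auto intro: prod.cong)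

definition shift_quotient :: "real \<Rightarrow> (nat \<Rightarrow> complex) \<Rightarrow> (nat \<Rightarrow> complex) \<Rightarrow> nat \<Rightarrow> nat \<Rightarrow> real" where
  "shift_quotient p v w m n =
     norm (\<Prod>i=1..m. w i) powr p / (norm (\<Prod>i=1..m. v i) powr p * norm (\<Prod>i=1..m - n. w i) powr p)"

lemma shift_quotient_eq:
  assumes "n \<le> m" and "\<forall>i\<ge>1. w i \<noteq> 0"
  shows "shift_quotient p v w m n = (norm (\<Prod>i\<in>{m - n<..m}. w i) / norm (\<Prod>i=1..m. v i)) powr p"
proof -
  have "(\<Prod>i=1..m. w i) = (\<Prod>i=1..m - n. w i) * (\<Prod>i\<in>{m - n<..m}. w i)"
    using prod_atLeastAtMost_split[of w "m - n" n] assms(1) by simp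
  moreover have "(\<Prod>i=1..m - n. w i) \<noteq> 0"
    using assms(2) by simp
  ultimately show ?thesis
    by (simp add: shift_quotient_def norm_mult powr_mult powr_divide)
qed

lemma tail_product_less:
  assumes "(bshift w ^^ n) x \<in> sup_ball p \<eta>" and "(bshift v ^^ m) x \<in> near_e0 p" and "n \<le> m"
  shows "norm (\<Prod>i\<in>{m - n<..m}. w i) < 2 * \<eta> * norm (\<Prod>i=1..m. v i)"
proof -
  define P V where "P = norm (\<Prod>i\<in>{m - n<..m}. w i)" and "V = norm (\<Prod>i=1..m. v i)"
  have "(bshift w ^^ n) x (m - n) = (\<Prod>i\<in>{m - n<..m}. w i) * x m"
    using funpow_bshift_apply[where w=w and k=n and i="m - n"] assms(3) by simp
  moreover obtain r where "r < \<eta>" "norm ((bshift w ^^ n) x (m - n)) \<le> r"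
    using assms(1) by (auto simp: sup_ball_def)
  ultimately have small: "P * norm (x m) < \<eta>"
    by (simp add: P_def norm_mult)
  have "{0<..m} = {1..m}" by auto
  then have "(bshift v ^^ m) x 0 = (\<Prod>i=1..m. v i) * x m"
    using funpow_bshift_apply[where w=v and k=m and i=0] by simp
  with assms(2) have "norm ((\<Prod>i=1..m. v i) * x m - 1) < 1/2"
    by (simp add: near_e0_def)
  then have large: "1/2 < V * norm (x m)"
    using norm_triangle_ineq2[of 1 "(\<Prod>i=1..m. v i) * x m"]
    by (simp add: V_def norm_mult norm_minus_commute)
  have "\<eta> > 0"
    using order.strict_trans1[OF _ small] by (simp add: P_def)
  then have "\<eta> < 2 * \<eta> * (V * norm (x m))"
    using mult_strict_left_mono[OF large, of "2 * \<eta>"] by simp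
  with small have "P * norm (x m) < (2 * \<eta> * V) * norm (x m)"
    by (simp add: mult.assoc)
  then show ?thesis
    unfolding P_def V_def by (rule mult_right_less_imp_less) simp
qed

lemma shift_quotient_le:
  assumes "p > 0" and "\<forall>i\<ge>1. w i \<noteq> 0" and "n \<le> m"
    and "(bshift w ^^ n) x \<in> sup_ball p (c / 2)" and "(bshift v ^^ m) x \<in> near_e0 p"
  shows "shift_quotient p v w m n \<le> c powr p"
proof -
  define P V where "P = norm (\<Prod>i\<in>{m - n<..m}. w i)" and "V = norm (\<Prod>i=1..m. v i)"
  have less: "P < c * V"
    using tail_product_less[OF assms(4,5,3)] by (simp add: P_def V_def)
  moreover have "0 \<le> P" "0 \<le> V"
    by (simp_all add: P_def V_def)
  ultimately have "V > 0 \<and> c > 0"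
    using zero_less_mult_iff[of c V] by linarith
  with less have "P / V \<le> c"
    by (simp add: divide_le_eq)
  then have "(P / V) powr p \<le> c powr p"
    using assms(1) by (intro powr_mono2) (auto simp: P_def V_def)
  then show ?thesis
    using shift_quotient_eq[OF assms(3,2)] by (simp add: P_def V_def)
qed

lemma lower_density_pos_card:
  assumes "lower_density A > 0"
  obtains c where "c > 0" "\<forall>\<^sub>F N in sequentially. c * real N < real (card (A \<inter> {..<N}))"
proof -
  obtain c where c: "0 < ereal c" "ereal c < lower_density A"
    using ereal_dense2[OF assms] by blast
  have "\<forall>\<^sub>F N in sequentially. ereal c < ereal (real (card (A \<inter> {..<N})) / real N)"
    using less_LiminfD[OF c(2)[unfolded lower_density_def]] .
  moreover have "\<forall>\<^sub>F N in sequentially. N > (0::nat)"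
    by (rule eventually_gt_at_top)
  ultimately have "\<forall>\<^sub>F N in sequentially. c * real N < real (card (A \<inter> {..<N}))"
    by eventually_elim (simp add: field_simps)
  with c(1) that show ?thesis by auto
qed

text \<open>A set of lower density \<open>> c\<close> meets every window \<open>[K n, L n)\<close> with \<open>L \<ge> K / c\<close>
  for all large \<open>n\<close>, since otherwise \<open>A \<inter> [0, L n)\<close> would have at most \<open>K n \<le> c L n\<close> elements.\<close>
lemma lower_density_pos_window:
  assumes "lower_density A > 0"
  obtains L N0 where "K < L" "\<And>n. n \<ge> N0 \<Longrightarrow> \<exists>m\<in>A. K * n \<le> m \<and> m < L * n"
proof -
  obtain c where "c > 0" and "\<forall>\<^sub>F N in sequentially. c * real N < real (card (A \<inter> {..<N}))"
    using lower_density_pos_card[OF assms] .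
  then obtain N0 where N0: "\<And>N. N \<ge> N0 \<Longrightarrow> c * real N < real (card (A \<inter> {..<N}))"
    by (auto simp: eventually_sequentially)
  define L where "L = nat \<lceil>real K / c\<rceil> + K + 1"
  have "K < L" by (simp add: L_def)
  have "real K / c \<le> real L"
    unfolding L_def by linarith
  with \<open>c > 0\<close> have Lc: "real K \<le> c * real L"
    by (simp add: field_simps)
  have "\<exists>m\<in>A. K * n \<le> m \<and> m < L * n" if "n \<ge> N0" for n
  proof (rule ccontr)
    assume "\<not> ?thesis"
    then have "A \<inter> {..<L * n} \<subseteq> {..<K * n}" by auto
    then have "card (A \<inter> {..<L * n}) \<le> K * n"
      using card_mono[of "{..<K * n}"] by simp
    moreover have "n \<le> L * n"
      using \<open>K < L\<close> by simp
    then have "c * real (L * n) < real (card (A \<inter> {..<L * n}))"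
      using that by (intro N0) linarith
    moreover have "real (K * n) \<le> c * real (L * n)"
      using Lc by (simp add: mult.assoc[symmetric] mult_right_mono)
    ultimately show False by linarith
  qed
  with \<open>K < L\<close> that show ?thesis by blast
qed

lemma lower_density_pos_unbounded:
  assumes "lower_density A > 0"
  shows "\<exists>n\<in>A. B < n"
proof -
  obtain L N0 where "\<And>n. n \<ge> N0 \<Longrightarrow> \<exists>m\<in>A. 1 * n \<le> m \<and> m < L * n"
    using lower_density_pos_window[OF assms, of 1] by metis
  from this[of "max N0 (Suc B)"] show ?thesis
    by (force simp: Suc_le_eq)
qed

lemma lower_density_window_sequences:
  fixes D :: "nat \<Rightarrow> nat set"
  assumes "lower_density A > 0" and "\<And>l. lower_density (D l) > 0" and "K \<ge> 1"
  obtains L n m where "K < L" "strict_mono n" "strict_mono m"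
    "\<And>l. n l \<in> D l \<and> m l \<in> A \<and> 0 < n l \<and> K * n l \<le> m l \<and> m l < L * n l"
proof -
  obtain L N0 where "K < L" and L: "\<And>n. n \<ge> N0 \<Longrightarrow> \<exists>m\<in>A. K * n \<le> m \<and> m < L * n"
    using lower_density_pos_window[where K=K, OF assms(1)] by blast
  define P where "P l nm \<longleftrightarrow> fst nm \<in> D l \<and> snd nm \<in> A \<and> 0 < fst nm \<and>
      K * fst nm \<le> snd nm \<and> snd nm < L * fst nm" for l and nm :: "nat \<times> nat"
  have next_pair: "\<exists>nm. P l nm \<and> B < fst nm" for l B
  proof -
    obtain n where "n \<in> D l" "max B N0 < n"
      using lower_density_pos_unbounded[OF assms(2)] by blast
    moreover obtain m where "m \<in> A" "K * n \<le> m" "m < L * n"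
      using L[of n] \<open>max B N0 < n\<close> by auto
    ultimately show ?thesis
      by (intro exI[of _ "(n, m)"]) (auto simp: P_def)
  qed
  obtain f where f: "\<And>l. P l (f l) \<and> snd (f l) < fst (f (Suc l))"
    using dependent_nat_choice[of P "\<lambda>_ nm nm'. snd nm < fst nm'"] next_pair by metis
  define n m where "n = fst \<circ> f" and "m = snd \<circ> f"
  have props: "n l \<in> D l \<and> m l \<in> A \<and> 0 < n l \<and> K * n l \<le> m l \<and> m l < L * n l" for l
    using f[of l] by (simp add: P_def n_def m_def)
  have "n l \<le> m l" for l
    using props[of l] mult_le_mono1[OF assms(3), of "n l"] by linarith
  moreover have "m l < n (Suc l)" for l
    using f[of l] by (simp add: n_def m_def)
  ultimately have "strict_mono n" "strict_mono m"
    by (auto intro!: strict_monoI_Suc intro: le_less_trans less_le_trans)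
  with \<open>K < L\<close> props that show ?thesis by blast
qed

lemma window_ratio_bounds:
  fixes n m K L :: nat
  assumes "0 < n" "0 < K" "K * n \<le> m" "m \<le> L * n"
  shows "1 / real L \<le> real n / real m" "real n / real m \<le> 1 / real K"
proof -
  have "0 < m"
    using assms(1-3) by (metis less_le_trans nat_0_less_mult_iff)
  with assms have le: "real K * real n \<le> real m" "real m \<le> real L * real n"
    and pos: "0 < real n" "0 < real K" "0 < real m"
    by (simp_all flip: of_nat_mult)
  have "1 / real L = real n / (real L * real n)"
    using pos by simp
  also have "\<dots> \<le> real n / real m"
    using le pos by (intro frac_le) auto
  finally show "1 / real L \<le> real n / real m" .
  have "real n / real m \<le> real n / (real K * real n)"
    using le pos by (intro frac_le) auto
  also have "\<dots> = 1 / real K"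
    using pos by simp
  finally show "real n / real m \<le> 1 / real K" .
qed

text \<open>Taking windows \<open>[K n, L n)\<close> with \<open>1/K < \<epsilon>\<close> pins the ratios \<open>n/m\<close> into \<open>(1/L, 1/K]\<close>.\<close>
lemma lower_density_ratio_sequences:
  fixes D :: "nat \<Rightarrow> nat set" and \<epsilon> :: real
  assumes "lower_density A > 0" and "\<And>l. lower_density (D l) > 0" and "\<epsilon> > 0"
  obtains n m where "strict_mono n" "strict_mono m"
    "\<And>l. n l \<in> D l \<and> m l \<in> A \<and> 0 < n l \<and> n l \<le> m l"
    "liminf (\<lambda>l. ereal (real (n l) / real (m l))) > 0"
    "limsup (\<lambda>l. ereal (real (n l) / real (m l))) < ereal \<epsilon>"
proof -
  define K where "K = nat \<lceil>1 / \<epsilon>\<rceil> + 1"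
  have "K \<ge> 1" by (simp add: K_def)
  have "1 / \<epsilon> < real K"
    unfolding K_def by linarith
  then have "1 < real K * \<epsilon>"
    using assms(3) by (simp add: pos_divide_less_eq)
  with \<open>K \<ge> 1\<close> have "1 / real K < \<epsilon>"
    by (simp add: pos_divide_less_eq mult.commute)
  obtain L n m where "K < L" "strict_mono n" "strict_mono m" and
    nm: "\<And>l. n l \<in> D l \<and> m l \<in> A \<and> 0 < n l \<and> K * n l \<le> m l \<and> m l < L * n l"
    using lower_density_window_sequences[where D=D, OF assms(1,2) \<open>K \<ge> 1\<close>] by blast
  have "n l \<le> m l" for l
    using nm[of l] mult_le_mono1[OF \<open>K \<ge> 1\<close>, of "n l"] by linarith
  have ratio: "1 / real L \<le> real (n l) / real (m l)" "real (n l) / real (m l) \<le> 1 / real K" for l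
    using window_ratio_bounds[of "n l" K "m l" L] nm[of l] \<open>K \<ge> 1\<close> by auto
  have "0 < ereal (1 / real L)"
    using \<open>K < L\<close> by simp
  also have "ereal (1 / real L) \<le> liminf (\<lambda>l. ereal (real (n l) / real (m l)))"
    by (rule Liminf_bounded) (simp add: ratio)
  finally have "liminf (\<lambda>l. ereal (real (n l) / real (m l))) > 0" .
  moreover have "limsup (\<lambda>l. ereal (real (n l) / real (m l))) \<le> ereal (1 / real K)"
    by (rule Limsup_bounded) (simp add: ratio)
  with \<open>1 / real K < \<epsilon>\<close> have "limsup (\<lambda>l. ereal (real (n l) / real (m l))) < ereal \<epsilon>"
    by (simp add: order.strict_trans1)
  ultimately show ?thesis
    using that \<open>strict_mono n\<close> \<open>strict_mono m\<close> nm \<open>\<And>l. n l \<le> m l\<close> by blast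
qed

lemma shift_quotient_summable:
  fixes v w x :: "nat \<Rightarrow> complex" and p \<epsilon> :: real
  assumes "p > 0" and "\<forall>i\<ge>1. w i \<noteq> 0"
    and "x \<in> FHC p (bshift v)" and "x \<in> FHC p (bshift w)" and "\<epsilon> > 0"
  obtains m n where "strict_mono m" "strict_mono n" "\<And>k. 0 < n k \<and> n k \<le> m k"
    "liminf (\<lambda>k. ereal (real (n k) / real (m k))) > 0"
    "limsup (\<lambda>k. ereal (real (n k) / real (m k))) < ereal \<epsilon>"
    "summable (\<lambda>k. shift_quotient p v w (m k) (n k))"
proof -
  define A where "A = {m. (bshift v ^^ m) x \<in> near_e0 p}"
  define D where "D l = {n. (bshift w ^^ n) x \<in> sup_ball p ((1/2) ^ l / 2)}" for l :: nat
  have dA: "lower_density A > 0"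
    using assms(3) lp_open_near_e0[OF assms(1)] near_e0_nonempty by (auto simp: FHC_def A_def)
  have dD: "lower_density (D l) > 0" for l
    using assms(4) lp_open_sup_ball[OF assms(1)] sup_ball_nonempty by (auto simp: FHC_def D_def)
  obtain n m where "strict_mono n" "strict_mono m"
    and nm: "\<And>l. n l \<in> D l \<and> m l \<in> A \<and> 0 < n l \<and> n l \<le> m l"
    and "liminf (\<lambda>l. ereal (real (n l) / real (m l))) > 0"
    and "limsup (\<lambda>l. ereal (real (n l) / real (m l))) < ereal \<epsilon>"
    using lower_density_ratio_sequences[where D=D, OF dA dD assms(5)] by blast
  have bound: "norm (shift_quotient p v w (m l) (n l)) \<le> ((1/2) powr p) ^ l" for l
  proof -
    have "shift_quotient p v w (m l) (n l) \<le> ((1/2) ^ l) powr p"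
      using nm[of l] by (intro shift_quotient_le[OF assms(1,2)]) (auto simp: A_def D_def)
    also have "\<dots> = ((1/2) powr p) ^ l"
      by (simp add: powr_realpow[symmetric] powr_powr mult.commute)
    finally show ?thesis
      by (simp add: shift_quotient_def)
  qed
  have "summable (\<lambda>l. ((1/2::real) powr p) ^ l)"
    using assms(1) by (intro summable_geometric) (simp add: powr01_less_one)
  then have "summable (\<lambda>l. shift_quotient p v w (m l) (n l))"
    by (rule summable_comparison_test'[where N=0]) (use bound in auto)
  with that show ?thesis
    using \<open>strict_mono n\<close> \<open>strict_mono m\<close> nm \<open>liminf _ > 0\<close> \<open>limsup _ < _\<close> by blast
qed

theorem theorem4p9:
  fixes p \<epsilon> :: real and v w :: "nat \<Rightarrow> complex"
  assumes "1 \<le> p"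
    and "is_weight v" and "is_weight w"
    and "FHC p (bshift v) \<noteq> {}" and "FHC p (bshift w) \<noteq> {}"
    and "FHC p (bshift v) \<inter> FHC p (bshift w) \<noteq> {}"
    and "0 < \<epsilon>" and "\<epsilon> < 1"
  shows "\<exists>m n m' n' :: nat \<Rightarrow> nat.
     strict_mono m \<and> strict_mono n \<and> strict_mono m' \<and> strict_mono n' \<and>
     (\<forall>k. 0 < m k \<and> 0 < n k \<and> 0 < m' k \<and> 0 < n' k) \<and>
     filterlim m at_top sequentially \<and> filterlim n at_top sequentially \<and>
     filterlim m' at_top sequentially \<and> filterlim n' at_top sequentially \<and>
     liminf (\<lambda>k. ereal (real (n k) / real (m k))) > 0 \<and>
     limsup (\<lambda>k. ereal (real (n k) / real (m k))) < ereal \<epsilon> \<and>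
     liminf (\<lambda>k. ereal (real (n' k) / real (m' k))) > 0 \<and>
     limsup (\<lambda>k. ereal (real (n' k) / real (m' k))) < ereal \<epsilon> \<and>
     summable (\<lambda>l. norm (\<Prod>i=1..m l. w i) powr p /
        (norm (\<Prod>i=1..m l. v i) powr p * norm (\<Prod>i=1..m l - n l. w i) powr p)) \<and>
     summable (\<lambda>l. norm (\<Prod>i=1..m' l. v i) powr p /
        (norm (\<Prod>i=1..m' l. w i) powr p * norm (\<Prod>i=1..m' l - n' l. v i) powr p))"
proof -
  obtain x where xv: "x \<in> FHC p (bshift v)" and xw: "x \<in> FHC p (bshift w)"
    using assms(6) by blast
  have "p > 0" "\<forall>i\<ge>1. v i \<noteq> 0" "\<forall>i\<ge>1. w i \<noteq> 0"
    using assms(1-3) by (auto simp: is_weight_def)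
  obtain m n where m: "strict_mono m" and n: "strict_mono n" and nm: "\<And>k. 0 < n k \<and> n k \<le> m k"
    and "liminf (\<lambda>k. ereal (real (n k) / real (m k))) > 0"
    and "limsup (\<lambda>k. ereal (real (n k) / real (m k))) < ereal \<epsilon>"
    and "summable (\<lambda>k. shift_quotient p v w (m k) (n k))"
    using shift_quotient_summable[OF \<open>p > 0\<close> \<open>\<forall>i\<ge>1. w i \<noteq> 0\<close> xv xw assms(7)] by blast
  moreover obtain m' n' where m': "strict_mono m'" and n': "strict_mono n'"
    and nm': "\<And>k. 0 < n' k \<and> n' k \<le> m' k"
    and "liminf (\<lambda>k. ereal (real (n' k) / real (m' k))) > 0"
    and "limsup (\<lambda>k. ereal (real (n' k) / real (m' k))) < ereal \<epsilon>"
    and "summable (\<lambda>k. shift_quotient p w v (m' k) (n' k))"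
    using shift_quotient_summable[OF \<open>p > 0\<close> \<open>\<forall>i\<ge>1. v i \<noteq> 0\<close> xw xv assms(7)] by blast
  moreover have "\<forall>k. 0 < m k \<and> 0 < n k \<and> 0 < m' k \<and> 0 < n' k"
    using nm nm' by (meson order.strict_trans2)
  ultimately show ?thesis
    using filterlim_subseq[OF m] filterlim_subseq[OF n] filterlim_subseq[OF m'] filterlim_subseq[OF n']
    unfolding shift_quotient_def by blast
qed

end
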